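(* Let $\mu$ be an ergodic invariant probability measure for $\Phi$ and $f\in B(\mathcal X)$. If there exists a Borel set $\bar{\mathcal X}\subset\mathcal X$ with $\mu(\bar{\mathcal X})>0$ such that $\sup_{t\ge0}\mathbb E^x|f(\Phi_t)|<\infty$ for every $x\in\bar{\mathcal X}$, then $f\in L^1(\mu)$.
   Context: $(\mathcal{X},\rho)$ is a Polish space; $\Phi=\{\Phi_t\}_{t\ge0}$ is a càdlàg Feller Markov process on $\mathcal{X}$ with laws $\mathbb{P}^x$, expectations $\mathbb E^x$, and transition kernels $P_t(x,\cdot)$. $B(\mathcal X)$ is the set of Borel real functions. A probability measure $\mu$ is invariant if $\int P_t(x,\cdot)\mu(dx)=\mu$ for all $t\ge0$, and ergodic if moreover every invariant set has $\mu$-measure $0$ or $1$ (equivalently, $\mu$ is an extreme point of the invariant probability measures). *)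

theory Defs
  imports "HOL-Probability.Probability"
begin

text \<open>A cadlag Feller Markov process on a Polish space 'a, realised on a common
  sample space: M x is the law P^x, X t is the coordinate Phi_t.\<close>

definition bounded_borel :: "('a::topological_space \<Rightarrow> real) \<Rightarrow> bool" where
  "bounded_borel h \<longleftrightarrow> h \<in> borel_measurable borel \<and> bounded (range h)"

definition trans_kernel ::
  "('a \<Rightarrow> 'w measure) \<Rightarrow> (real \<Rightarrow> 'w \<Rightarrow> 'a) \<Rightarrow> real \<Rightarrow> 'a \<Rightarrow> 'a set \<Rightarrow> real" where
  "trans_kernel M X t x A = measure (M x) {\<omega> \<in> space (M x). X t \<omega> \<in> A}"

definition cadlag_feller_markov ::
  "('a::polish_space \<Rightarrow> 'w measure) \<Rightarrow> (real \<Rightarrow> 'w \<Rightarrow> 'a) \<Rightarrow> bool" where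
  "cadlag_feller_markov M X \<longleftrightarrow>
     (\<forall>x y. space (M x) = space (M y) \<and> sets (M x) = sets (M y)) \<and>
     (\<forall>x. prob_space (M x)) \<and>
     (\<forall>x t. t \<ge> 0 \<longrightarrow> X t \<in> M x \<rightarrow>\<^sub>M borel) \<and>
     (\<forall>x. AE \<omega> in M x. X 0 \<omega> = x) \<and>
     \<comment> \<open>cadlag paths\<close>
     (\<forall>x. \<forall>\<omega>\<in>space (M x).
        (\<forall>t\<ge>0. ((\<lambda>s. X s \<omega>) \<longlongrightarrow> X t \<omega>) (at_right t)) \<and>
        (\<forall>t>0. \<exists>l. ((\<lambda>s. X s \<omega>) \<longlongrightarrow> l) (at_left t))) \<and>
     \<comment> \<open>measurability of the transition kernels\<close>
     (\<forall>t h. t \<ge> 0 \<longrightarrow> bounded_borel h \<longrightarrow>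
        (\<lambda>x. \<integral>\<omega>. h (X t \<omega>) \<partial>M x) \<in> borel_measurable borel) \<and>
     \<comment> \<open>Markov property w.r.t. the natural filtration\<close>
     (\<forall>x s t ts gs h. s \<ge> 0 \<longrightarrow> t \<ge> 0 \<longrightarrow> length ts = length gs \<longrightarrow>
        set ts \<subseteq> {0..s} \<longrightarrow> (\<forall>g\<in>set gs. bounded_borel g) \<longrightarrow> bounded_borel h \<longrightarrow>
        (\<integral>\<omega>. (\<Prod>i<length ts. (gs ! i) (X (ts ! i) \<omega>)) * h (X (s + t) \<omega>) \<partial>M x) =
        (\<integral>\<omega>. (\<Prod>i<length ts. (gs ! i) (X (ts ! i) \<omega>)) *
               (\<integral>\<omega>'. h (X t \<omega>') \<partial>M (X s \<omega>)) \<partial>M x)) \<and>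
     \<comment> \<open>Feller property\<close>
     (\<forall>t h. t \<ge> 0 \<longrightarrow> continuous_on UNIV h \<longrightarrow> bounded (range h) \<longrightarrow>
        continuous_on UNIV (\<lambda>x. \<integral>\<omega>. (h :: 'a \<Rightarrow> real) (X t \<omega>) \<partial>M x))"

definition invariant_measure ::
  "('a::polish_space \<Rightarrow> 'w measure) \<Rightarrow> (real \<Rightarrow> 'w \<Rightarrow> 'a) \<Rightarrow> 'a measure \<Rightarrow> bool" where
  "invariant_measure M X \<mu> \<longleftrightarrow> prob_space \<mu> \<and> sets \<mu> = sets borel \<and>
     (\<forall>t\<ge>0. \<forall>A\<in>sets borel. (\<integral>x. trans_kernel M X t x A \<partial>\<mu>) = measure \<mu> A)"

definition invariant_set ::
  "('a::polish_space \<Rightarrow> 'w measure) \<Rightarrow> (real \<Rightarrow> 'w \<Rightarrow> 'a) \<Rightarrow> 'a measure \<Rightarrow> 'a set \<Rightarrow> bool" where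
  "invariant_set M X \<mu> A \<longleftrightarrow> A \<in> sets borel \<and>
     (\<forall>t\<ge>0. AE x in \<mu>. trans_kernel M X t x A = indicator A x)"

definition ergodic_measure ::
  "('a::polish_space \<Rightarrow> 'w measure) \<Rightarrow> (real \<Rightarrow> 'w \<Rightarrow> 'a) \<Rightarrow> 'a measure \<Rightarrow> bool" where
  "ergodic_measure M X \<mu> \<longleftrightarrow> invariant_measure M X \<mu> \<and>
     (\<forall>A. invariant_set M X \<mu> A \<longrightarrow> measure \<mu> A = 0 \<or> measure \<mu> A = 1)"

end

theory Submission
  imports Defs
begin

(*
  For bounded Borel h let V h be the limsup of P_r h as r \<rightarrow> \<infinity> along the rationals.  By the
  Markov property V h \<le> P_q (V h) for rational q \<ge> 0, and since \<mu> is invariant a bounded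
  subharmonic function is harmonic \<mu>-a.e.; approximating indicators by piecewise linear
  functions of V h, so are the indicators of its level sets.  Right continuity of the paths at
  time 0 and inner regularity of \<mu> extend this from rational to all real times, so the level
  sets of V h are invariant.  Since \<integral> V h d\<mu> \<ge> \<integral> h d\<mu>, ergodicity forces
  V h > \<integral> h d\<mu> - 1 \<mu>-a.e., in particular at some point x of the set of positive measure.
  For the truncations h = min |f| n this gives \<integral> h d\<mu> \<le> sup_t E^x |f(\<Phi>_t)| + 1 uniformly
  in n, and monotone convergence shows f \<in> L^1(\<mu>).
*)

lemma bounded_borel_iff:
  "bounded_borel g \<longleftrightarrow> g \<in> borel_measurable borel \<and> (\<exists>B. \<forall>x. \<bar>g x\<bar> \<le> B)"
  unfolding bounded_borel_def bounded_iff by auto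

lemma bounded_borelE:
  assumes "bounded_borel g"
  obtains B where "g \<in> borel_measurable borel" "\<And>x. \<bar>g x\<bar> \<le> B"
  using assms by (auto simp: bounded_borel_iff)

lemma bounded_borelI:
  "g \<in> borel_measurable borel \<Longrightarrow> (\<And>x. \<bar>g x\<bar> \<le> B) \<Longrightarrow> bounded_borel g"
  by (auto simp: bounded_borel_iff)

lemma bounded_borel_const: "bounded_borel (\<lambda>_. c)"
  by (rule bounded_borelI[where B="\<bar>c\<bar>"]) auto

lemma bounded_borel_indicator: "A \<in> sets borel \<Longrightarrow> bounded_borel (indicator A)"
  by (rule bounded_borelI[where B=1]) auto

lemma bounded_borel_add:
  assumes "bounded_borel g" "bounded_borel g'"
  shows "bounded_borel (\<lambda>x. g x + g' x)"
proof -
  obtain B B' where "g \<in> borel_measurable borel" "\<And>x. \<bar>g x\<bar> \<le> B"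
    and "g' \<in> borel_measurable borel" "\<And>x. \<bar>g' x\<bar> \<le> B'"
    using assms by (auto elim!: bounded_borelE)
  then show ?thesis
    by (intro bounded_borelI[where B="B + B'"]) (auto intro: abs_triangle_ineq[THEN order_trans] add_mono)
qed

lemma bounded_borel_diff:
  assumes "bounded_borel g" "bounded_borel g'"
  shows "bounded_borel (\<lambda>x. g x - g' x)"
proof -
  obtain B B' where "g \<in> borel_measurable borel" "\<And>x. \<bar>g x\<bar> \<le> B"
    and "g' \<in> borel_measurable borel" "\<And>x. \<bar>g' x\<bar> \<le> B'"
    using assms by (auto elim!: bounded_borelE)
  then show ?thesis
    by (intro bounded_borelI[where B="B + B'"]) (auto intro: abs_triangle_ineq4[THEN order_trans] add_mono)
qed

lemma bounded_borel_mult: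
  assumes "bounded_borel g" "bounded_borel g'"
  shows "bounded_borel (\<lambda>x. g x * g' x)"
proof -
  obtain B B' where "g \<in> borel_measurable borel" "\<And>x. \<bar>g x\<bar> \<le> B"
    and "g' \<in> borel_measurable borel" "\<And>x. \<bar>g' x\<bar> \<le> B'"
    using assms by (auto elim!: bounded_borelE)
  then show ?thesis
    by (intro bounded_borelI[where B="B * B'"]) (auto simp: abs_mult intro: mult_mono')
qed

lemma bounded_borel_cmult: "bounded_borel g \<Longrightarrow> bounded_borel (\<lambda>x. c * g x)"
  using bounded_borel_mult[OF bounded_borel_const] .

lemma bounded_borel_max:
  assumes "bounded_borel g"
  shows "bounded_borel (\<lambda>x. max (g x) c)"
proof -
  obtain B where "g \<in> borel_measurable borel" "\<And>x. \<bar>g x\<bar> \<le> B"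
    using assms by (auto elim!: bounded_borelE)
  moreover have "\<bar>max (g x) c\<bar> \<le> B + \<bar>c\<bar>" for x
    using \<open>\<And>x. \<bar>g x\<bar> \<le> B\<close>[of x] by linarith
  ultimately show ?thesis by (intro bounded_borelI[where B="B + \<bar>c\<bar>"]) auto
qed

text \<open>Rises linearly from \<open>0\<close> at \<open>a = c\<close> to \<open>1\<close> at \<open>a = c + 1 / (k + 1)\<close>; written with \<open>max\<close> so that
  \<open>ramp k c \<circ> u\<close> is a linear combination of \<open>max u c\<close>, \<open>max u (c + 1 / (k + 1))\<close> and constants.\<close>
definition ramp :: "nat \<Rightarrow> real \<Rightarrow> real \<Rightarrow> real" where
  "ramp k c a = 1 + real (Suc k) * (max a c - max a (c + inverse (real (Suc k))))"

lemma abs_ramp_le_1: "\<bar>ramp k c a\<bar> \<le> 1"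
proof -
  define e where "e = inverse (real (Suc k))"
  have e: "0 < e" "real (Suc k) * e = 1"
    unfolding e_def by simp_all
  have "- e \<le> max a c - max a (c + e)" "max a c - max a (c + e) \<le> 0"
    using e by auto
  then have "- 1 \<le> real (Suc k) * (max a c - max a (c + e))"
    and "real (Suc k) * (max a c - max a (c + e)) \<le> 0"
    using mult_left_mono[of "- e" _ "real (Suc k)"] e by (auto simp: mult_nonneg_nonpos)
  then show ?thesis
    unfolding ramp_def e_def[symmetric] by linarith
qed

lemma ramp_tendsto_indicator: "(\<lambda>k. ramp k c a) \<longlonglongrightarrow> indicator {c<..} a"
proof (cases "c < a")
  case True
  have "eventually (\<lambda>k. inverse (real (Suc k)) < a - c) sequentially"
    using True by (intro order_tendstoD(2)[OF LIMSEQ_inverse_real_of_nat]) auto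
  then have "eventually (\<lambda>k. ramp k c a = 1) sequentially"
    by (rule eventually_mono) (use True in \<open>auto simp: ramp_def\<close>)
  then show ?thesis using True by (simp add: tendsto_eventually)
next
  case False
  have "ramp k c a = 0" for k
  proof -
    define e where "e = inverse (real (Suc k))"
    have e: "0 < e" "real (Suc k) * e = 1"
      unfolding e_def by simp_all
    then have "max a c = c" "max a (c + e) = c + e"
      using False by auto
    then show ?thesis
      unfolding ramp_def e_def[symmetric] using e by (simp add: algebra_simps)
  qed
  then show ?thesis using False by simp
qed

lemma bounded_convergence:
  fixes s :: "nat \<Rightarrow> 'b \<Rightarrow> real"
  assumes "finite_measure N" "f \<in> borel_measurable N" "\<And>i. s i \<in> borel_measurable N"
    and "AE x in N. (\<lambda>i. s i x) \<longlonglongrightarrow> f x"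
    and "\<And>i x. x \<in> space N \<Longrightarrow> \<bar>s i x\<bar> \<le> B"
  shows "(\<lambda>i. \<integral>x. s i x \<partial>N) \<longlonglongrightarrow> (\<integral>x. f x \<partial>N)"
proof (rule integral_dominated_convergence[where w="\<lambda>_. B"])
  interpret finite_measure N by fact
  show "integrable N (\<lambda>_. B)" by simp
qed (use assms in auto)

lemma bounded_convergence_at_right:
  fixes s :: "real \<Rightarrow> 'b \<Rightarrow> real"
  assumes "finite_measure N" "f \<in> borel_measurable N" "\<And>d. d > a \<Longrightarrow> s d \<in> borel_measurable N"
    and "AE x in N. ((\<lambda>d. s d x) \<longlongrightarrow> f x) (at_right a)"
    and "\<And>d x. d > a \<Longrightarrow> x \<in> space N \<Longrightarrow> \<bar>s d x\<bar> \<le> B"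
  shows "((\<lambda>d. \<integral>x. s d x \<partial>N) \<longlongrightarrow> (\<integral>x. f x \<partial>N)) (at_right a)"
proof (rule tendsto_at_right_sequentially[where b="a + 1"])
  fix S :: "nat \<Rightarrow> real" assume S: "\<And>n. a < S n" "S \<longlonglongrightarrow> a"
  then have "filterlim S (at_right a) sequentially"
    by (auto simp: filterlim_at intro: always_eventually)
  then show "(\<lambda>n. \<integral>x. s (S n) x \<partial>N) \<longlonglongrightarrow> (\<integral>x. f x \<partial>N)"
    using assms S(1) by (intro bounded_convergence) (auto elim!: AE_mp intro: filterlim_compose)
qed simp

lemma inner_regular_approx:
  fixes N :: "'a::{second_countable_topology, complete_space} measure"
  assumes "finite_measure N" "sets N = sets borel" "A \<in> sets borel" "0 < e"
  obtains K where "K \<subseteq> A" "compact K" "measure N (A - K) < e"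
proof (cases "measure N A < e")
  case True
  then show ?thesis using that[of "{}"] by simp
next
  case False
  interpret finite_measure N by fact
  have "ennreal (measure N A - e) < emeasure N A"
    using False \<open>0 < e\<close> by (simp add: emeasure_eq_measure ennreal_lessI)
  also have "emeasure N A = (SUP K \<in> {K. K \<subseteq> A \<and> compact K}. emeasure N K)"
    by (rule inner_regular[OF assms(2) _ assms(3)]) simp
  finally obtain K where K: "K \<subseteq> A" "compact K" "ennreal (measure N A - e) < emeasure N K"
    by (auto simp: less_SUP_iff)
  then have "measure N A - e < measure N K"
    using False \<open>0 < e\<close> by (simp add: emeasure_eq_measure ennreal_less_iff)
  moreover have "K \<in> sets N"
    using K(2) assms(2) by (simp add: compact_imp_closed)
  ultimately have "measure N (A - K) < e"
    using K(1) assms(2,3) by (simp add: finite_measure_Diff)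
  with K(1,2) show ?thesis by (rule that)
qed

lemma AE_exists_in_set:
  assumes "AE x in N. P x" "A \<in> sets N" "emeasure N A \<noteq> 0"
  shows "\<exists>x\<in>A. P x"
proof (rule ccontr)
  assume "\<not> (\<exists>x\<in>A. P x)"
  with assms(1) have "AE x in N. x \<notin> A" by (auto elim: AE_mp)
  with assms(2,3) show False using AE_iff_null_sets by blast
qed

lemma integrableI_bounded_truncations:
  fixes f :: "'b \<Rightarrow> real"
  assumes N: "finite_measure N" and f: "f \<in> borel_measurable N"
    and bound: "\<And>n::nat. (\<integral>x. min \<bar>f x\<bar> (real n) \<partial>N) \<le> C"
  shows "integrable N f"
proof -
  interpret finite_measure N by (rule N)
  have "(\<integral>\<^sup>+x. ennreal (norm (f x)) \<partial>N) = (\<integral>\<^sup>+x. (SUP n. ennreal (min \<bar>f x\<bar> (real n))) \<partial>N)"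
  proof (intro nn_integral_cong antisym SUP_least)
    fix x
    obtain n where "\<bar>f x\<bar> \<le> real n" using real_arch_simple by blast
    then show "ennreal (norm (f x)) \<le> (SUP n. ennreal (min \<bar>f x\<bar> (real n)))"
      by (intro SUP_upper2[of n]) auto
  qed (auto intro: ennreal_leI)
  also have "\<dots> = (SUP n. \<integral>\<^sup>+x. min \<bar>f x\<bar> (real n) \<partial>N)"
    using f by (intro nn_integral_monotone_convergence_SUP)
      (auto simp: incseq_def le_fun_def intro!: ennreal_leI)
  also have "\<dots> = (SUP n. ennreal (\<integral>x. min \<bar>f x\<bar> (real n) \<partial>N))"
  proof (intro SUP_cong refl nn_integral_eq_integral)
    fix n :: nat
    show "integrable N (\<lambda>x. min \<bar>f x\<bar> (real n))"
      using f by (intro integrable_const_bound[where B="real n"]) auto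
  qed auto
  also have "\<dots> \<le> ennreal C"
    using bound by (intro SUP_least ennreal_leI)
  finally show ?thesis
    using f by (intro integrableI_bounded) (auto simp: top.not_eq_extremum order.strict_trans1)
qed

section \<open>The transition semigroup\<close>

locale markov_process =
  fixes M :: "'a::polish_space \<Rightarrow> 'w measure" and X :: "real \<Rightarrow> 'w \<Rightarrow> 'a"
  assumes cadlag_feller_markov: "cadlag_feller_markov M X"
begin

definition P :: "real \<Rightarrow> ('a \<Rightarrow> real) \<Rightarrow> 'a \<Rightarrow> real" where
  "P t g x = (\<integral>\<omega>. g (X t \<omega>) \<partial>M x)"

lemma prob_space_M: "prob_space (M x)"
  and measurable_X: "t \<ge> 0 \<Longrightarrow> X t \<in> M x \<rightarrow>\<^sub>M borel"
  and AE_X_0: "AE \<omega> in M x. X 0 \<omega> = x"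
  and right_continuous_paths: "\<omega> \<in> space (M x) \<Longrightarrow> t \<ge> 0 \<Longrightarrow> ((\<lambda>s. X s \<omega>) \<longlongrightarrow> X t \<omega>) (at_right t)"
  and measurable_P: "t \<ge> 0 \<Longrightarrow> bounded_borel h \<Longrightarrow> P t h \<in> borel_measurable borel"
  using cadlag_feller_markov unfolding cadlag_feller_markov_def P_def by blast+

lemma P_add_times:
  assumes "s \<ge> 0" "t \<ge> 0" "bounded_borel h"
  shows "P (s + t) h x = P s (P t h) x"
proof -
  have "\<forall>x s t ts gs h. s \<ge> 0 \<longrightarrow> t \<ge> 0 \<longrightarrow> length ts = length gs \<longrightarrow>
        set ts \<subseteq> {0..s} \<longrightarrow> (\<forall>g\<in>set gs. bounded_borel g) \<longrightarrow> bounded_borel h \<longrightarrow>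
        (\<integral>\<omega>. (\<Prod>i<length ts. (gs ! i) (X (ts ! i) \<omega>)) * h (X (s + t) \<omega>) \<partial>M x) =
        (\<integral>\<omega>. (\<Prod>i<length ts. (gs ! i) (X (ts ! i) \<omega>)) *
               (\<integral>\<omega>'. h (X t \<omega>') \<partial>M (X s \<omega>)) \<partial>M x)"
    using cadlag_feller_markov unfolding cadlag_feller_markov_def by blast
  from this[rule_format, of s t "[]" "[]" h x] assms show ?thesis
    unfolding P_def by simp
qed

lemma measurable_comp_X:
  "t \<ge> 0 \<Longrightarrow> g \<in> borel_measurable borel \<Longrightarrow> (\<lambda>\<omega>. g (X t \<omega>)) \<in> borel_measurable (M x)"
  using measurable_compose[OF measurable_X] by blast

lemma integrable_comp_X:
  assumes "t \<ge> 0" "bounded_borel g"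
  shows "integrable (M x) (\<lambda>\<omega>. g (X t \<omega>))"
proof -
  interpret prob_space "M x" by (rule prob_space_M)
  obtain B where "g \<in> borel_measurable borel" "\<And>y. \<bar>g y\<bar> \<le> B"
    using assms(2) by (auto elim!: bounded_borelE)
  then show ?thesis
    by (intro integrable_const_bound[where B=B]) (auto intro: measurable_comp_X[OF assms(1)])
qed

lemma P_bound:
  assumes "\<And>y. \<bar>g y\<bar> \<le> B"
  shows "\<bar>P t g x\<bar> \<le> B"
proof (cases "integrable (M x) (\<lambda>\<omega>. g (X t \<omega>))")
  case True
  interpret prob_space "M x" by (rule prob_space_M)
  have "\<bar>P t g x\<bar> \<le> (\<integral>\<omega>. \<bar>g (X t \<omega>)\<bar> \<partial>M x)"
    unfolding P_def by (rule integral_abs_bound)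
  also have "\<dots> \<le> B"
    using True assms by (intro integral_le_const) auto
  finally show ?thesis .
next
  case False
  then show ?thesis using assms[of undefined] by (simp add: P_def not_integrable_integral_eq)
qed

lemma P_nonneg: "(\<And>y. 0 \<le> g y) \<Longrightarrow> 0 \<le> P t g x"
  unfolding P_def by (rule Bochner_Integration.integral_nonneg) auto

lemma P_mono:
  "t \<ge> 0 \<Longrightarrow> bounded_borel g \<Longrightarrow> bounded_borel g' \<Longrightarrow> (\<And>y. g y \<le> g' y) \<Longrightarrow> P t g x \<le> P t g' x"
  unfolding P_def by (intro integral_mono integrable_comp_X) auto

lemma P_const: "P t (\<lambda>_. c) x = c"
proof -
  interpret prob_space "M x" by (rule prob_space_M)
  show ?thesis by (simp add: P_def prob_space)
qed

lemma P_add: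
  "t \<ge> 0 \<Longrightarrow> bounded_borel g \<Longrightarrow> bounded_borel g' \<Longrightarrow> P t (\<lambda>y. g y + g' y) x = P t g x + P t g' x"
  unfolding P_def by (intro Bochner_Integration.integral_add integrable_comp_X)

lemma P_diff:
  "t \<ge> 0 \<Longrightarrow> bounded_borel g \<Longrightarrow> bounded_borel g' \<Longrightarrow> P t (\<lambda>y. g y - g' y) x = P t g x - P t g' x"
  unfolding P_def by (intro Bochner_Integration.integral_diff integrable_comp_X)

lemma P_cmult: "P t (\<lambda>y. c * g y) x = c * P t g x"
  unfolding P_def by simp

lemma bounded_borel_P: "t \<ge> 0 \<Longrightarrow> bounded_borel g \<Longrightarrow> bounded_borel (P t g)"
  by (metis P_bound bounded_borelE bounded_borelI measurable_P)

lemma P_indicator_Compl: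
  assumes "t \<ge> 0" "A \<in> sets borel"
  shows "P t (indicator (- A)) x = 1 - P t (indicator A) x"
proof -
  have "indicator (- A) = (\<lambda>y. 1 - indicator A y :: real)"
    by (simp add: fun_eq_iff indicator_compl)
  then show ?thesis
    using P_diff[OF assms(1) bounded_borel_const bounded_borel_indicator[OF assms(2)], of 1 x]
    by (simp add: P_const)
qed

lemma trans_kernel_eq_P:
  assumes "A \<in> sets borel"
  shows "trans_kernel M X t x A = P t (indicator A) x"
proof -
  have "P t (indicator A) x = (\<integral>\<omega>. indicator {\<omega> \<in> space (M x). X t \<omega> \<in> A} \<omega> \<partial>M x)"
    unfolding P_def by (intro Bochner_Integration.integral_cong) (auto simp: indicator_def)
  then show ?thesis
    unfolding trans_kernel_def by (simp add: Int_absorb2)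
qed

text \<open>\<open>P_limsup h x\<close> is \<open>limsup\<close> of \<open>P r h x\<close> as \<open>r \<rightarrow> \<infinity>\<close>, with \<open>r\<close> restricted to the rationals to
  keep it Borel measurable.\<close>
definition tail_sup :: "('a \<Rightarrow> real) \<Rightarrow> nat \<Rightarrow> 'a \<Rightarrow> real" where
  "tail_sup h n x = (SUP r \<in> \<rat> \<inter> {real n..}. P r h x)"

definition P_limsup :: "('a \<Rightarrow> real) \<Rightarrow> 'a \<Rightarrow> real" where
  "P_limsup h x = (INF n. tail_sup h n x)"

context
  fixes h :: "'a \<Rightarrow> real" and B :: real
  assumes h_meas: "h \<in> borel_measurable borel" and h_bound: "\<And>x. \<bar>h x\<bar> \<le> B"
begin

lemma bounded_borel_h: "bounded_borel h"
  using h_meas h_bound by (rule bounded_borelI)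

lemma P_h_bound: "\<bar>P t h x\<bar> \<le> B"
  by (rule P_bound) (rule h_bound)

lemma bdd_above_P: "bdd_above ((\<lambda>r. P r h x) ` S)"
  using P_h_bound by (intro bdd_aboveI[where M=B]) (auto simp: abs_le_iff)

lemma tail_sup_nonempty: "\<rat> \<inter> {real n..} \<noteq> {}"
  by (metis Int_iff Rats_of_nat atLeast_iff empty_iff order_refl)

lemma P_le_tail_sup: "r \<in> \<rat> \<Longrightarrow> real n \<le> r \<Longrightarrow> P r h x \<le> tail_sup h n x"
  unfolding tail_sup_def by (rule cSUP_upper[OF _ bdd_above_P]) auto

lemma tail_sup_bound: "\<bar>tail_sup h n x\<bar> \<le> B"
proof -
  have "tail_sup h n x \<le> B"
    unfolding tail_sup_def using P_h_bound
    by (intro cSUP_least[OF tail_sup_nonempty]) (auto simp: abs_le_iff)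
  moreover have "- B \<le> tail_sup h n x"
    using P_le_tail_sup[of "real n" n x] P_h_bound[of "real n" x] by auto
  ultimately show ?thesis by auto
qed

lemma measurable_tail_sup: "tail_sup h n \<in> borel_measurable borel"
  unfolding tail_sup_def
  by (rule borel_measurable_cSUP)
    (auto intro: countable_subset[OF _ countable_rat] measurable_P bounded_borel_h bdd_above_P)

lemma decseq_tail_sup: "decseq (\<lambda>n. tail_sup h n x)"
  unfolding decseq_Suc_iff tail_sup_def
  by (intro allI cSUP_subset_mono[OF tail_sup_nonempty bdd_above_P]) auto

lemma tail_sup_lower_bound: "- B \<le> tail_sup h n x"
  using tail_sup_bound[of n x] by linarith

lemma bdd_below_tail_sup: "bdd_below (range (\<lambda>n. tail_sup h n x))"
  using tail_sup_lower_bound by (intro bdd_belowI[where m="- B"]) auto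

lemma tail_sup_tendsto_P_limsup: "(\<lambda>n. tail_sup h n x) \<longlonglongrightarrow> P_limsup h x"
  unfolding P_limsup_def by (rule LIMSEQ_decseq_INF[OF bdd_below_tail_sup decseq_tail_sup])

lemma P_limsup_le_tail_sup: "P_limsup h x \<le> tail_sup h n x"
  unfolding P_limsup_def by (rule cINF_lower[OF bdd_below_tail_sup]) simp

lemma P_limsup_bound: "\<bar>P_limsup h x\<bar> \<le> B"
proof -
  have "P_limsup h x \<le> B"
    using P_limsup_le_tail_sup[of x 0] tail_sup_bound[of 0 x] by linarith
  moreover have "- B \<le> P_limsup h x"
    unfolding P_limsup_def by (intro cINF_greatest tail_sup_lower_bound) auto
  ultimately show ?thesis by linarith
qed

lemma measurable_P_limsup: "P_limsup h \<in> borel_measurable borel"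
  unfolding P_limsup_def
  by (rule borel_measurable_cINF) (auto intro: measurable_tail_sup bdd_below_tail_sup)

lemma bounded_borel_P_limsup: "bounded_borel (P_limsup h)"
  using measurable_P_limsup P_limsup_bound by (rule bounded_borelI)

lemma P_limsup_le:
  assumes "\<And>t. t \<ge> 0 \<Longrightarrow> P t h x \<le> C"
  shows "P_limsup h x \<le> C"
proof -
  have "tail_sup h 0 x \<le> C"
    unfolding tail_sup_def using assms by (intro cSUP_least[OF tail_sup_nonempty]) auto
  then show ?thesis
    using P_limsup_le_tail_sup[of x 0] by linarith
qed

lemma P_limsup_subharmonic:
  assumes q: "q \<in> \<rat>" "q \<ge> 0"
  shows "P_limsup h x \<le> P q (P_limsup h) x"
proof -
  define m where "m = nat \<lceil>q\<rceil>"
  have "tail_sup h (n + m) x \<le> P q (tail_sup h n) x" for n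
    unfolding tail_sup_def[of h "n + m"]
  proof (rule cSUP_least[OF tail_sup_nonempty])
    fix r assume r: "r \<in> \<rat> \<inter> {real (n + m)..}"
    then have r_q: "r - q \<in> \<rat>" "real n \<le> r - q"
      using q unfolding m_def by (auto intro: Rats_diff) linarith
    then have "P r h x = P q (P (r - q) h) x"
      using P_add_times[OF q(2) _ bounded_borel_h, of "r - q" x] by simp
    also have "\<dots> \<le> P q (tail_sup h n) x"
      using r_q by (intro P_mono[OF q(2)] bounded_borel_P bounded_borel_h P_le_tail_sup
          bounded_borelI[OF measurable_tail_sup tail_sup_bound]) auto
    finally show "P r h x \<le> P q (tail_sup h n) x" .
  qed
  moreover have "(\<lambda>n. P q (tail_sup h n) x) \<longlonglongrightarrow> P q (P_limsup h) x"
    unfolding P_def using prob_space_M[of x] q(2) tail_sup_tendsto_P_limsup tail_sup_bound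
    by (intro bounded_convergence[where B=B] measurable_comp_X measurable_tail_sup measurable_P_limsup)
      (auto simp: prob_space_def)
  ultimately show ?thesis
    by (intro LIMSEQ_le_const[of _ "P q (P_limsup h) x"]) (auto intro: order_trans[OF P_limsup_le_tail_sup])
qed

end

lemma P_le_SUP_nn_integral:
  assumes t: "t \<ge> 0" and g: "bounded_borel g" "\<And>y. 0 \<le> g y" "\<And>y. g y \<le> \<bar>f y\<bar>"
    and finite: "(SUP s\<in>{0..}. \<integral>\<^sup>+\<omega>. ennreal \<bar>f (X s \<omega>)\<bar> \<partial>M x) < \<infinity>"
  shows "P t g x \<le> enn2real (SUP s\<in>{0..}. \<integral>\<^sup>+\<omega>. ennreal \<bar>f (X s \<omega>)\<bar> \<partial>M x)"
proof -
  have "ennreal (P t g x) = (\<integral>\<^sup>+\<omega>. g (X t \<omega>) \<partial>M x)"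
    unfolding P_def using g by (intro nn_integral_eq_integral[symmetric] integrable_comp_X[OF t]) auto
  also have "\<dots> \<le> (\<integral>\<^sup>+\<omega>. ennreal \<bar>f (X t \<omega>)\<bar> \<partial>M x)"
    using g by (intro nn_integral_mono ennreal_leI) auto
  also have "\<dots> \<le> (SUP s\<in>{0..}. \<integral>\<^sup>+\<omega>. ennreal \<bar>f (X s \<omega>)\<bar> \<partial>M x)"
    using t by (intro SUP_upper) auto
  finally have "enn2real (ennreal (P t g x)) \<le> enn2real (SUP s\<in>{0..}. \<integral>\<^sup>+\<omega>. ennreal \<bar>f (X s \<omega>)\<bar> \<partial>M x)"
    using finite by (intro enn2real_mono) auto
  then show ?thesis
    using P_nonneg[of g t x] g(2) by simp
qed

end

section \<open>Invariant measures and subharmonic functions\<close>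

locale invariant_markov = markov_process +
  fixes \<mu> :: "'a measure"
  assumes invariant_measure: "invariant_measure M X \<mu>"
begin

lemma prob_space_\<mu>: "prob_space \<mu>"
  and sets_\<mu>: "sets \<mu> = sets borel"
  and measure_\<mu>_invariant: "t \<ge> 0 \<Longrightarrow> A \<in> sets borel \<Longrightarrow> (\<integral>x. trans_kernel M X t x A \<partial>\<mu>) = measure \<mu> A"
  using invariant_measure unfolding invariant_measure_def by auto

sublocale \<mu>: prob_space \<mu> by (rule prob_space_\<mu>)

lemma space_\<mu>: "space \<mu> = UNIV"
  using sets_eq_imp_space_eq[OF sets_\<mu>] by simp

lemma measurable_\<mu>: "g \<in> borel_measurable borel \<Longrightarrow> g \<in> borel_measurable \<mu>"
  using measurable_cong_sets[OF sets_\<mu> refl] by blast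

lemma integrable_\<mu>: "bounded_borel g \<Longrightarrow> integrable \<mu> g"
  by (elim bounded_borelE, rule \<mu>.integrable_const_bound) (auto intro: measurable_\<mu>)

definition transition :: "real \<Rightarrow> 'a \<Rightarrow> 'a measure" where
  "transition t x = distr (M x) borel (X t)"

lemma prob_space_transition: "t \<ge> 0 \<Longrightarrow> prob_space (transition t x)"
  unfolding transition_def using prob_space_M by (intro prob_space.prob_space_distr measurable_X)

lemma emeasure_transition:
  assumes "t \<ge> 0" "A \<in> sets borel"
  shows "emeasure (transition t x) A = P t (indicator A) x"
proof -
  interpret prob_space "M x" by (rule prob_space_M)
  show ?thesis
    using assms
    by (simp add: transition_def emeasure_distr measurable_X emeasure_eq_measure
        trans_kernel_eq_P[symmetric] trans_kernel_def vimage_def Int_def conj_commute)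
qed

lemma measurable_transition: "t \<ge> 0 \<Longrightarrow> transition t \<in> \<mu> \<rightarrow>\<^sub>M subprob_algebra borel"
proof (rule measurable_subprob_algebra)
  fix x assume "t \<ge> 0"
  then show "subprob_space (transition t x)"
    by (rule prob_space_transition[THEN prob_space_imp_subprob_space])
  show "sets (transition t x) = sets borel" unfolding transition_def by simp
next
  fix A :: "'a set" assume "t \<ge> 0" "A \<in> sets borel"
  then show "(\<lambda>x. emeasure (transition t x) A) \<in> borel_measurable \<mu>"
    by (simp add: emeasure_transition measurable_compose[OF measurable_\<mu>[OF measurable_P] measurable_ennreal]
        bounded_borel_indicator)
qed

lemma bind_transition: "t \<ge> 0 \<Longrightarrow> bind \<mu> (transition t) = \<mu>"
proof (rule measure_eqI)
  assume t: "t \<ge> 0"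
  have sets_transition: "sets (transition t x) = sets borel" for x
    unfolding transition_def by simp
  then show sets_eq: "sets (bind \<mu> (transition t)) = sets \<mu>"
    using sets_bind space_\<mu> sets_\<mu> by (metis UNIV_not_empty)
  fix A assume "A \<in> sets (bind \<mu> (transition t))"
  then have A: "A \<in> sets borel" using sets_eq sets_\<mu> by simp
  have "emeasure (bind \<mu> (transition t)) A = (\<integral>\<^sup>+x. P t (indicator A) x \<partial>\<mu>)"
    using A t by (simp add: emeasure_bind[OF _ measurable_transition] space_\<mu> emeasure_transition)
  also have "\<dots> = (\<integral>x. P t (indicator A) x \<partial>\<mu>)"
    using A t by (intro nn_integral_eq_integral integrable_\<mu> bounded_borel_P bounded_borel_indicator)
      (auto intro: P_nonneg)
  also have "\<dots> = measure \<mu> A"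
    using measure_\<mu>_invariant[OF t A] by (simp add: trans_kernel_eq_P[OF A])
  finally show "emeasure (bind \<mu> (transition t)) A = emeasure \<mu> A"
    by (simp add: \<mu>.emeasure_eq_measure)
qed

lemma integral_P:
  assumes t: "t \<ge> 0" and g: "bounded_borel g"
  shows "(\<integral>x. P t g x \<partial>\<mu>) = (\<integral>x. g x \<partial>\<mu>)"
proof -
  obtain B where g_meas: "g \<in> borel_measurable borel" and B: "\<And>x. \<bar>g x\<bar> \<le> B"
    using g by (auto elim!: bounded_borelE)
  have "(\<integral>x. g x \<partial>\<mu>) = (\<integral>x. g x \<partial>bind \<mu> (transition t))"
    by (simp add: bind_transition[OF t])
  also have "\<dots> = (\<integral>x. (\<integral>y. g y \<partial>transition t x) \<partial>\<mu>)"
    using g_meas B measurable_transition[OF t] prob_space_transition[OF t]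
    by (intro integral_bind[where B=B and B'=1])
      (auto simp: prob_space.emeasure_space_1 \<mu>.finite_measure_axioms)
  also have "\<dots> = (\<integral>x. P t g x \<partial>\<mu>)"
    unfolding transition_def P_def using g_meas measurable_X[OF t] by (simp add: integral_distr)
  finally show ?thesis by simp
qed

lemma subharmonic_imp_AE_harmonic:
  assumes t: "t \<ge> 0" and u: "bounded_borel u" and sub: "\<And>x. u x \<le> P t u x"
  shows "AE x in \<mu>. P t u x = u x"
proof -
  have int: "integrable \<mu> (\<lambda>x. P t u x - u x)"
    using t u by (intro Bochner_Integration.integrable_diff integrable_\<mu> bounded_borel_P)
  have "(\<integral>x. P t u x - u x \<partial>\<mu>) = 0"
    using t u by (simp add: Bochner_Integration.integral_diff integrable_\<mu> bounded_borel_P integral_P)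
  then have "AE x in \<mu>. P t u x - u x = 0"
    using integral_nonneg_eq_0_iff_AE[OF int] sub by auto
  then show ?thesis by auto
qed

lemma subharmonic_max:
  assumes t: "t \<ge> 0" and u: "bounded_borel u" and sub: "\<And>x. u x \<le> P t u x"
  shows "max (u x) c \<le> P t (\<lambda>y. max (u y) c) x"
  using sub[of x] P_mono[OF t u bounded_borel_max[OF u, of c], where x=x]
    P_mono[OF t bounded_borel_const bounded_borel_max[OF u, of c], where x=x]
  by (simp add: P_const)

lemma AE_harmonic_limit:
  assumes t: "t \<ge> 0" and g: "\<And>k. bounded_borel (g k)" and "h \<in> borel_measurable borel"
    and harmonic: "\<And>k. AE x in \<mu>. P t (g k) x = g k x"
    and lim: "\<And>y. (\<lambda>k. g k y) \<longlonglongrightarrow> h y" and bound: "\<And>k y. \<bar>g k y\<bar> \<le> B"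
  shows "AE x in \<mu>. P t h x = h x"
proof -
  have conv: "(\<lambda>k. P t (g k) x) \<longlonglongrightarrow> P t h x" for x
    unfolding P_def using assms prob_space_M[of x]
    by (intro bounded_convergence[where B=B] measurable_comp_X)
      (auto simp: prob_space_def bounded_borel_iff)
  have "AE x in \<mu>. \<forall>k. P t (g k) x = g k x"
    using harmonic by (simp add: AE_all_countable)
  then show ?thesis
  proof (rule AE_mp, intro AE_I2 impI)
    fix x assume "\<forall>k. P t (g k) x = g k x"
    with conv[of x] have "(\<lambda>k. g k x) \<longlonglongrightarrow> P t h x" by simp
    then show "P t h x = h x" by (rule LIMSEQ_unique[OF _ lim])
  qed
qed

lemma subharmonic_level_set_AE_harmonic:
  assumes t: "t \<ge> 0" and u: "bounded_borel u" and sub: "\<And>x. u x \<le> P t u x"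
  shows "AE x in \<mu>. P t (indicator {y. c < u y}) x = indicator {y. c < u y} x"
proof -
  define e where "e k = inverse (real (Suc k))" for k
  define g where "g k y = ramp k c (u y)" for k y
  have max_bb: "bounded_borel (\<lambda>y. max (u y) a)" for a
    by (rule bounded_borel_max[OF u])
  have g_eq: "g k = (\<lambda>y. 1 + real (Suc k) * (max (u y) c - max (u y) (c + e k)))" for k
    by (simp add: fun_eq_iff g_def ramp_def e_def)
  have g_bb: "bounded_borel (g k)" for k
    unfolding g_eq
    by (intro bounded_borel_add bounded_borel_const bounded_borel_cmult bounded_borel_diff max_bb)
  have P_g: "P t (g k) x = 1 + real (Suc k) * (P t (\<lambda>y. max (u y) c) x - P t (\<lambda>y. max (u y) (c + e k)) x)"
    for k x
    unfolding g_eq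
    by (simp add: P_add[OF t] P_diff[OF t] P_cmult P_const bounded_borel_const bounded_borel_cmult
        bounded_borel_diff max_bb)
  have max_harmonic: "AE x in \<mu>. P t (\<lambda>y. max (u y) a) x = max (u x) a" for a
    by (rule subharmonic_imp_AE_harmonic[OF t max_bb subharmonic_max[OF t u sub]])
  have g_harmonic: "AE x in \<mu>. P t (g k) x = g k x" for k
    using max_harmonic[of c] max_harmonic[of "c + e k"]
    by eventually_elim (simp add: P_g g_def ramp_def e_def)
  have g_bound: "\<bar>g k y\<bar> \<le> 1" for k y
    unfolding g_def by (rule abs_ramp_le_1)
  have "(\<lambda>k. g k y) \<longlonglongrightarrow> indicator {y. c < u y} y" for y
    using ramp_tendsto_indicator[of c "u y"] by (simp add: g_def indicator_def)
  then show ?thesis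
    using u by (intro AE_harmonic_limit[OF t g_bb _ g_harmonic _ g_bound]) (auto elim: bounded_borelE)
qed

subsection \<open>From rational to real times\<close>

definition leak :: "'a set \<Rightarrow> real \<Rightarrow> real" where
  "leak A t = (\<integral>x. indicator (- A) x * P t (indicator A) x \<partial>\<mu>)"

lemma bounded_borel_leak_integrand:
  "t \<ge> 0 \<Longrightarrow> A \<in> sets borel \<Longrightarrow> bounded_borel (\<lambda>x. indicator (- A) x * P t (indicator A) x)"
  by (intro bounded_borel_mult bounded_borel_indicator bounded_borel_P) auto

lemma leak_nonneg: "0 \<le> leak A t"
  unfolding leak_def by (intro Bochner_Integration.integral_nonneg mult_nonneg_nonneg P_nonneg) auto

lemma leak_eq_0_iff:
  assumes "t \<ge> 0" "A \<in> sets borel"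
  shows "leak A t = 0 \<longleftrightarrow> (AE x in \<mu>. x \<notin> A \<longrightarrow> P t (indicator A) x = 0)"
proof -
  have "leak A t = 0 \<longleftrightarrow> (AE x in \<mu>. indicator (- A) x * P t (indicator A) x = 0)"
    unfolding leak_def using assms
    by (intro integral_nonneg_eq_0_iff_AE integrable_\<mu> bounded_borel_leak_integrand)
      (auto intro!: mult_nonneg_nonneg P_nonneg)
  also have "\<dots> \<longleftrightarrow> (AE x in \<mu>. x \<notin> A \<longrightarrow> P t (indicator A) x = 0)"
    by (intro AE_cong) (auto split: split_indicator)
  finally show ?thesis .
qed

lemma AE_harmonic_indicator_iff_leak:
  assumes t: "t \<ge> 0" and A: "A \<in> sets borel"
  shows "(AE x in \<mu>. P t (indicator A) x = indicator A x) \<longleftrightarrow> leak A t = 0 \<and> leak (- A) t = 0"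
proof -
  have "P t (indicator A) x = indicator A x \<longleftrightarrow>
      (x \<notin> A \<longrightarrow> P t (indicator A) x = 0) \<and> (x \<notin> - A \<longrightarrow> P t (indicator (- A)) x = 0)" for x
    using P_indicator_Compl[OF t A, of x] by (cases "x \<in> A") auto
  then have "(AE x in \<mu>. P t (indicator A) x = indicator A x) \<longleftrightarrow>
      (AE x in \<mu>. (x \<notin> A \<longrightarrow> P t (indicator A) x = 0) \<and> (x \<notin> - A \<longrightarrow> P t (indicator (- A)) x = 0))"
    by (intro AE_cong) blast
  also have "\<dots> \<longleftrightarrow> leak A t = 0 \<and> leak (- A) t = 0"
    using A by (simp only: AE_conj_iff leak_eq_0_iff[OF t] borel_comp)
  finally show ?thesis .
qed

lemma leak_le_leak_subset:
  assumes d: "d \<ge> 0" and A: "A \<in> sets borel" and F: "F \<in> sets borel" "F \<subseteq> A"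
  shows "leak A d \<le> leak F d + measure \<mu> (A - F)"
proof -
  have AF: "A - F \<in> sets borel" using A F by auto
  have split: "P d (indicator A) x = P d (indicator F) x + P d (indicator (A - F)) x" for x
  proof -
    have "indicator A = (\<lambda>y. indicator F y + indicator (A - F) y :: real)"
      using F by (auto simp: fun_eq_iff indicator_def)
    then show ?thesis
      using P_add[OF d bounded_borel_indicator[OF F(1)] bounded_borel_indicator[OF AF]] by simp
  qed
  have pointwise: "indicator (- A) x * P d (indicator A) x
      \<le> indicator (- F) x * P d (indicator F) x + P d (indicator (A - F)) x" for x
    using F(2) split[of x] P_nonneg[of "indicator F" d x] P_nonneg[of "indicator (A - F)" d x]
    by (cases "x \<in> A"; cases "x \<in> F") auto
  have "leak A d \<le> (\<integral>x. indicator (- F) x * P d (indicator F) x + P d (indicator (A - F)) x \<partial>\<mu>)"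
    unfolding leak_def using A F AF d pointwise
    by (intro integral_mono Bochner_Integration.integrable_add integrable_\<mu>
        bounded_borel_leak_integrand bounded_borel_P bounded_borel_indicator)
  also have "\<dots> = leak F d + measure \<mu> (A - F)"
    unfolding leak_def using F AF d
    by (simp add: Bochner_Integration.integral_add integrable_\<mu> bounded_borel_leak_integrand
        bounded_borel_P bounded_borel_indicator integral_P space_\<mu>)
  finally show ?thesis .
qed

lemma P_indicator_closed_tendsto_0:
  assumes F: "closed F" and x: "x \<notin> F"
  shows "((\<lambda>d. P d (indicator F) x) \<longlongrightarrow> 0) (at_right 0)"
proof -
  have "AE \<omega> in M x. ((\<lambda>d. indicator F (X d \<omega>) :: real) \<longlongrightarrow> 0) (at_right 0)"
    using AE_X_0[of x]
  proof (rule AE_mp, intro AE_I2 impI)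
    fix \<omega> assume "\<omega> \<in> space (M x)" "X 0 \<omega> = x"
    then have "((\<lambda>d. X d \<omega>) \<longlongrightarrow> x) (at_right 0)"
      using right_continuous_paths[of \<omega> x 0] by simp
    then have "eventually (\<lambda>d. X d \<omega> \<in> - F) (at_right 0)"
      using F x by (intro topological_tendstoD) auto
    then show "((\<lambda>d. indicator F (X d \<omega>) :: real) \<longlongrightarrow> 0) (at_right 0)"
      by (intro tendsto_eventually) (auto elim: eventually_mono)
  qed
  then show ?thesis
    unfolding P_def using prob_space_M[of x] F
    by (intro bounded_convergence_at_right[where f="\<lambda>_. 0" and B=1, simplified] measurable_comp_X)
      (auto simp: prob_space_def)
qed

lemma leak_closed_tendsto_0:
  assumes F: "closed F"
  shows "(leak F \<longlongrightarrow> 0) (at_right 0)"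
  unfolding leak_def
proof (rule bounded_convergence_at_right[where f="\<lambda>_. 0" and B=1, simplified])
  show "finite_measure \<mu>" by (rule \<mu>.finite_measure_axioms)
  show "AE x in \<mu>. ((\<lambda>d. indicator (- F) x * P d (indicator F) x) \<longlongrightarrow> 0) (at_right 0)"
    using P_indicator_closed_tendsto_0[OF F] by (auto simp: indicator_def)
  fix d :: real and x assume "0 < d"
  then show "(\<lambda>x. indicator (- F) x * P d (indicator F) x) \<in> borel_measurable \<mu>"
    using F by (intro borel_measurable_integrable integrable_\<mu> bounded_borel_leak_integrand) auto
  have "\<bar>P d (indicator F) x\<bar> \<le> 1" by (rule P_bound) (simp add: indicator_def)
  then show "\<bar>indicator (- F) x * P d (indicator F) x\<bar> \<le> 1" by (simp add: indicator_def)
qed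

lemma leak_tendsto_0:
  assumes A: "A \<in> sets borel"
  shows "(leak A \<longlongrightarrow> 0) (at_right 0)"
proof (rule order_tendstoI)
  fix a :: real assume "a < 0"
  then show "eventually (\<lambda>d. a < leak A d) (at_right 0)"
    using leak_nonneg by (auto intro: always_eventually less_le_trans)
next
  fix e :: real assume e: "0 < e"
  obtain F where F: "F \<subseteq> A" "compact F" and small_rest: "measure \<mu> (A - F) < e / 2"
    using inner_regular_approx[OF \<mu>.finite_measure_axioms sets_\<mu> A, of "e / 2"] e by auto
  then have F_closed: "closed F" by (simp add: compact_imp_closed)
  then have F_borel: "F \<in> sets borel" by simp
  have "eventually (\<lambda>d. 0 < d \<and> leak F d < e / 2) (at_right 0)"
    using e by (intro eventually_conj eventually_at_right_less order_tendstoD(2)[OF leak_closed_tendsto_0[OF F_closed]]) auto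
  then show "eventually (\<lambda>d. leak A d < e) (at_right 0)"
  proof (rule eventually_mono)
    fix d assume "0 < d \<and> leak F d < e / 2"
    then show "leak A d < e"
      using leak_le_leak_subset[OF _ A F_borel F(1), of d] small_rest by linarith
  qed
qed

lemma leak_le_leak_shift:
  assumes t: "t \<ge> 0" and d: "d \<ge> 0" and A: "A \<in> sets borel"
  shows "leak A t \<le> leak A (t + d) + leak (- A) d"
proof -
  define G where "G y = indicator A y * P d (indicator (- A)) y" for y
  have G_bb: "bounded_borel G"
    unfolding G_def using A d by (intro bounded_borel_mult bounded_borel_indicator bounded_borel_P) auto
  have G_nonneg: "0 \<le> G y" for y
    unfolding G_def by (intro mult_nonneg_nonneg P_nonneg) auto
  have A_P_bb: "bounded_borel (P d (indicator A))"
    using A d by (intro bounded_borel_P bounded_borel_indicator)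
  text \<open>Mass in \<open>A\<close> is, a time \<open>d\<close> later, either still in \<open>A\<close> or has left it.\<close>
  have "indicator A y \<le> P d (indicator A) y + G y" for y
    using P_indicator_Compl[OF d A, of y] P_nonneg[of "indicator A" d y]
      P_nonneg[of "indicator (- A)" d y]
    by (cases "y \<in> A") (auto simp: G_def)
  then have "P t (indicator A) x \<le> P t (\<lambda>y. P d (indicator A) y + G y) x" for x
    using A by (intro P_mono[OF t] bounded_borel_indicator bounded_borel_add A_P_bb G_bb)
  also have "P t (\<lambda>y. P d (indicator A) y + G y) x = P (t + d) (indicator A) x + P t G x" for x
    using A by (simp add: P_add[OF t A_P_bb G_bb] P_add_times[OF t d] bounded_borel_indicator)
  finally have "indicator (- A) x * P t (indicator A) x
      \<le> indicator (- A) x * P (t + d) (indicator A) x + P t G x" for x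
    using P_nonneg[of G t x] G_nonneg by (cases "x \<in> A") auto
  then have "leak A t \<le> (\<integral>x. indicator (- A) x * P (t + d) (indicator A) x + P t G x \<partial>\<mu>)"
    unfolding leak_def using A t d
    by (intro integral_mono Bochner_Integration.integrable_add integrable_\<mu> bounded_borel_P G_bb
        bounded_borel_leak_integrand) auto
  also have "\<dots> = leak A (t + d) + (\<integral>x. G x \<partial>\<mu>)"
    unfolding leak_def using A t d
    by (simp add: Bochner_Integration.integral_add integrable_\<mu> bounded_borel_P G_bb
        bounded_borel_leak_integrand integral_P)
  also have "(\<integral>x. G x \<partial>\<mu>) = leak (- A) d"
    unfolding leak_def G_def by simp
  finally show ?thesis .
qed

lemma leak_eq_0_if_rational_times:
  assumes A: "A \<in> sets borel" and t: "t \<ge> 0"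
    and rational: "\<And>q. q \<in> \<rat> \<Longrightarrow> q \<ge> 0 \<Longrightarrow> leak A q = 0"
  shows "leak A t = 0"
proof -
  have "leak A t < e" if e: "0 < e" for e
  proof -
    have "eventually (\<lambda>d. leak (- A) d < e) (at_right 0)"
      using A e by (intro order_tendstoD(2)[OF leak_tendsto_0]) auto
    then obtain b where "0 < b" and small: "\<forall>d>0. d < b \<longrightarrow> leak (- A) d < e"
      unfolding eventually_at_right_field by blast
    then obtain r where r: "r \<in> \<rat>" "t < r" "r < t + b"
      using Rats_dense_in_real[of t "t + b"] by auto
    have "leak A t \<le> leak A r + leak (- A) (r - t)"
      using leak_le_leak_shift[OF t _ A, of "r - t"] r(2) by simp
    also have "leak A r = 0"
      using rational r(1,2) t by simp
    also have "leak (- A) (r - t) < e"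
      using small r(2,3) by simp
    finally show ?thesis by simp
  qed
  then have "leak A t \<le> 0"
    using field_le_epsilon[of "leak A t" 0] by (simp add: less_imp_le)
  then show ?thesis
    using leak_nonneg[of A t] by simp
qed

lemma invariant_set_if_rational_times:
  assumes A: "A \<in> sets borel"
    and rational: "\<And>q. q \<in> \<rat> \<Longrightarrow> q \<ge> 0 \<Longrightarrow> AE x in \<mu>. P q (indicator A) x = indicator A x"
  shows "invariant_set M X \<mu> A"
  unfolding invariant_set_def
proof (intro conjI allI impI A)
  fix t :: real assume t: "t \<ge> 0"
  have "leak A q = 0 \<and> leak (- A) q = 0" if "q \<in> \<rat>" "q \<ge> 0" for q
    using rational[OF that] AE_harmonic_indicator_iff_leak[OF that(2) A] by simp
  then have "leak A t = 0" "leak (- A) t = 0"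
    using leak_eq_0_if_rational_times[OF A t] leak_eq_0_if_rational_times[OF borel_comp[OF A] t]
    by blast+
  then show "AE x in \<mu>. trans_kernel M X t x A = indicator A x"
    using AE_harmonic_indicator_iff_leak[OF t A] by (simp add: trans_kernel_eq_P[OF A])
qed

context
  fixes h :: "'a \<Rightarrow> real" and B :: real
  assumes h_meas: "h \<in> borel_measurable borel" and h_bound: "\<And>x. \<bar>h x\<bar> \<le> B"
begin

lemma integral_le_integral_P_limsup: "(\<integral>x. h x \<partial>\<mu>) \<le> (\<integral>x. P_limsup h x \<partial>\<mu>)"
proof -
  have "(\<lambda>n. \<integral>x. tail_sup h n x \<partial>\<mu>) \<longlonglongrightarrow> (\<integral>x. P_limsup h x \<partial>\<mu>)"
    using h_meas h_bound
    by (intro bounded_convergence[where B=B] \<mu>.finite_measure_axioms measurable_\<mu> measurable_tail_sup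
        measurable_P_limsup tail_sup_tendsto_P_limsup tail_sup_bound AE_I2)
  moreover have "(\<integral>x. h x \<partial>\<mu>) \<le> (\<integral>x. tail_sup h n x \<partial>\<mu>)" for n
  proof -
    have "(\<integral>x. h x \<partial>\<mu>) = (\<integral>x. P (real n) h x \<partial>\<mu>)"
      using bounded_borel_h[OF h_meas h_bound] by (simp add: integral_P)
    also have "\<dots> \<le> (\<integral>x. tail_sup h n x \<partial>\<mu>)"
      using h_meas h_bound
      by (intro integral_mono integrable_\<mu> bounded_borel_P bounded_borel_h P_le_tail_sup
          bounded_borelI[OF measurable_tail_sup tail_sup_bound]) auto
    finally show ?thesis .
  qed
  ultimately show ?thesis
    by (intro LIMSEQ_le_const) auto
qed

lemma AE_less_P_limsup_if_ergodic:
  assumes ergodic: "ergodic_measure M X \<mu>" and c: "c < (\<integral>x. h x \<partial>\<mu>)"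
  shows "AE x in \<mu>. c < P_limsup h x"
proof -
  let ?A = "{y. c < P_limsup h y}"
  have A: "?A \<in> sets borel"
    using measurable_P_limsup[OF h_meas h_bound] by measurable
  have "invariant_set M X \<mu> ?A"
    using A h_meas h_bound
    by (intro invariant_set_if_rational_times subharmonic_level_set_AE_harmonic
        bounded_borel_P_limsup P_limsup_subharmonic) auto
  then have "measure \<mu> ?A = 0 \<or> measure \<mu> ?A = 1"
    using ergodic unfolding ergodic_measure_def by blast
  moreover have "measure \<mu> ?A \<noteq> 0"
  proof
    assume "measure \<mu> ?A = 0"
    then have "AE x in \<mu>. P_limsup h x \<le> c"
      using A by (subst AE_iff_measurable[of ?A]) (auto simp: sets_\<mu> space_\<mu> \<mu>.emeasure_eq_measure not_less)
    then have "(\<integral>x. P_limsup h x \<partial>\<mu>) \<le> c"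
      using h_meas h_bound by (intro \<mu>.integral_le_const integrable_\<mu> bounded_borel_P_limsup)
    then show False
      using c integral_le_integral_P_limsup by simp
  qed
  ultimately have "AE x in \<mu>. x \<in> ?A"
    using A by (intro \<mu>.AE_prob_1) (simp add: sets_\<mu>)
  then show ?thesis by simp
qed

end

end

theorem mainTheorem12:
  fixes M :: "'a::polish_space \<Rightarrow> 'w measure" and X :: "real \<Rightarrow> 'w \<Rightarrow> 'a"
    and \<mu> :: "'a measure" and f :: "'a \<Rightarrow> real" and Xb :: "'a set"
  assumes "cadlag_feller_markov M X"
    and "ergodic_measure M X \<mu>"
    and "f \<in> borel_measurable borel"
    and "Xb \<in> sets borel" and "measure \<mu> Xb > 0"
    and "\<forall>x\<in>Xb. (SUP t\<in>{0..}. \<integral>\<^sup>+\<omega>. ennreal \<bar>f (X t \<omega>)\<bar> \<partial>M x) < \<infinity>"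
  shows "integrable \<mu> f"
proof -
  interpret invariant_markov M X \<mu>
    using assms(1,2) by unfold_locales (simp_all add: ergodic_measure_def)
  define h where "h n y = min \<bar>f y\<bar> (real n)" for n :: nat and y
  have h_meas: "h n \<in> borel_measurable borel" and h_bound: "\<bar>h n y\<bar> \<le> real n" for n y
    using assms(3) unfolding h_def by auto
  have "AE x in \<mu>. \<forall>n. (\<integral>y. h n y \<partial>\<mu>) - 1 < P_limsup (h n) x"
    unfolding AE_all_countable using assms(2)
    by (intro allI AE_less_P_limsup_if_ergodic[OF h_meas h_bound]) auto
  then obtain x where "x \<in> Xb" and x: "\<And>n. (\<integral>y. h n y \<partial>\<mu>) - 1 < P_limsup (h n) x"
    using AE_exists_in_set[of _ \<mu> Xb] assms(4,5) by (auto simp: sets_\<mu> \<mu>.emeasure_eq_measure)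
  define K where "K = enn2real (SUP t\<in>{0..}. \<integral>\<^sup>+\<omega>. ennreal \<bar>f (X t \<omega>)\<bar> \<partial>M x)"
  have "P t (h n) x \<le> K" if "t \<ge> 0" for n t
    unfolding K_def using that assms(6) \<open>x \<in> Xb\<close>
    by (intro P_le_SUP_nn_integral bounded_borelI[OF h_meas h_bound]) (auto simp: h_def)
  then have "(\<integral>y. h n y \<partial>\<mu>) \<le> K + 1" for n
    using x[of n] P_limsup_le[OF h_meas[of n] h_bound[of n], of x K] by simp
  then show ?thesis
    using assms(3) by (intro integrableI_bounded_truncations[where C="K + 1"] \<mu>.finite_measure_axioms
        measurable_\<mu>) (simp_all add: h_def)
qed

end
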